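(* Let $G$ be a discrete group and $1<p<\infty$, and let $B_1=\{f\in\ell^1(G):\|f\|_{A_p(G)}\le 1\}$ be the unit ball of $(\ell^1(G),\cdot,\|\cdot\|_{A_p(G)})$. Suppose $B_1$ is bounded in the $\ell^1$-norm, i.e. there is $\alpha>0$ with $\|f\|_1\le\alpha$ for all $f\in B_1$. Then: (i) $(\ell^1(G),\cdot,\|\cdot\|_{A_p(G)})$ is Arens regular; (ii) $A_p(G)$ is Arens regular; (iii) $G$ has no infinite abelian subgroup; (iv) there is no sequence $(H_n)$ of finite subgroups of $G$ with $|H_1|<|H_2|<|H_3|<\cdots$; (v) there is $M>0$ such that $O(x)\le M$ for every $x\in G$, where $O(x)$ denotes the order of $x$.
   Context: For a discrete group $G$ and $1<p<\infty$, $\frac1p+\frac1q=1$, $A_p(G)$ is the space of functions $u=\sum_{i=1}^\infty g_i*f_i^{\vee}$ with $f_i\in \ell_p(G)$, $g_i\in \ell_q(G)$, $\sum_i\|f_i\|_p\|g_i\|_q<\infty$, where $f^{\vee}(x)=f(x^{-1})$; with pointwise multiplication and norm $\|u\|_{A_p(G)}=\inf\{\sum_i\|f_i\|_p\|g_i\|_q\}$ it is a commutative Banach algebra (the Herz algebra), and $\ell^1(G)\subseteq A_p(G)$ with $\|f\|_{A_p(G)}\le\|f\|_1$. A (normed) algebra $A$ is Arens regular if for all sequences $(a_n),(b_m)$ in its closed unit ball and all $T\in A^*$, $\lim_n\lim_m T(a_nb_m)=\lim_m\lim_n T(a_nb_m)$ whenever both exist. *)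

theory Defs
  imports "HOL-Analysis.Analysis" "HOL-Algebra.Multiplicative_Group"
begin

text \<open>Discrete group G (HOL-Algebra structure); functions G \<rightarrow> complex are
  represented as total functions that vanish off the carrier.\<close>

definition conj_exp :: "real \<Rightarrow> real" where
  "conj_exp p = p / (p - 1)"

definition in_lp :: "('a, 'b) monoid_scheme \<Rightarrow> real \<Rightarrow> ('a \<Rightarrow> complex) \<Rightarrow> bool" where
  "in_lp G p f \<longleftrightarrow> (\<forall>x. x \<notin> carrier G \<longrightarrow> f x = 0) \<and>
     (\<lambda>x. norm (f x) powr p) summable_on carrier G"

definition lp_norm :: "('a, 'b) monoid_scheme \<Rightarrow> real \<Rightarrow> ('a \<Rightarrow> complex) \<Rightarrow> real" where
  "lp_norm G p f = (\<Sum>\<^sub>\<infinity>x\<in>carrier G. norm (f x) powr p) powr (1 / p)"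

definition check_fun :: "('a, 'b) monoid_scheme \<Rightarrow> ('a \<Rightarrow> complex) \<Rightarrow> ('a \<Rightarrow> complex)" where
  "check_fun G f = (\<lambda>x. if x \<in> carrier G then f (inv\<^bsub>G\<^esub> x) else 0)"

definition conv :: "('a, 'b) monoid_scheme \<Rightarrow> ('a \<Rightarrow> complex) \<Rightarrow> ('a \<Rightarrow> complex) \<Rightarrow> ('a \<Rightarrow> complex)" where
  "conv G g h = (\<lambda>x. if x \<in> carrier G
      then (\<Sum>\<^sub>\<infinity>y\<in>carrier G. g y * h (inv\<^bsub>G\<^esub> y \<otimes>\<^bsub>G\<^esub> x)) else 0)"

definition Ap_rep :: "('a, 'b) monoid_scheme \<Rightarrow> real \<Rightarrow> ('a \<Rightarrow> complex)
     \<Rightarrow> (nat \<Rightarrow> 'a \<Rightarrow> complex) \<Rightarrow> (nat \<Rightarrow> 'a \<Rightarrow> complex) \<Rightarrow> bool" where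
  "Ap_rep G p u f g \<longleftrightarrow>
     (\<forall>i. in_lp G p (f i) \<and> in_lp G (conj_exp p) (g i)) \<and>
     summable (\<lambda>i. lp_norm G p (f i) * lp_norm G (conj_exp p) (g i)) \<and>
     (\<forall>x\<in>carrier G. (\<lambda>i. conv G (g i) (check_fun G (f i)) x) sums u x) \<and>
     (\<forall>x. x \<notin> carrier G \<longrightarrow> u x = 0)"

definition Ap_space :: "('a, 'b) monoid_scheme \<Rightarrow> real \<Rightarrow> ('a \<Rightarrow> complex) set" where
  "Ap_space G p = {u. \<exists>f g. Ap_rep G p u f g}"

definition Ap_norm :: "('a, 'b) monoid_scheme \<Rightarrow> real \<Rightarrow> ('a \<Rightarrow> complex) \<Rightarrow> real" where
  "Ap_norm G p u = Inf {(\<Sum>i. lp_norm G p (f i) * lp_norm G (conj_exp p) (g i)) | f g. Ap_rep G p u f g}"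

definition dual_space :: "('a \<Rightarrow> complex) set \<Rightarrow> (('a \<Rightarrow> complex) \<Rightarrow> real)
     \<Rightarrow> ((('a \<Rightarrow> complex) \<Rightarrow> complex)) set" where
  "dual_space A N = {T. (\<forall>a\<in>A. \<forall>b\<in>A. T (\<lambda>x. a x + b x) = T a + T b) \<and>
      (\<forall>a\<in>A. \<forall>c. T (\<lambda>x. c * a x) = c * T a) \<and>
      (\<exists>C. \<forall>a\<in>A. norm (T a) \<le> C * N a)}"

definition Arens_regular :: "('a \<Rightarrow> complex) set \<Rightarrow> (('a \<Rightarrow> complex) \<Rightarrow> real) \<Rightarrow> bool" where
  "Arens_regular A N \<longleftrightarrow>
     (\<forall>a b :: nat \<Rightarrow> 'a \<Rightarrow> complex. \<forall>T \<in> dual_space A N. \<forall>\<alpha> \<beta> L1 L2.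
        (\<forall>n. a n \<in> A \<and> N (a n) \<le> 1) \<and> (\<forall>m. b m \<in> A \<and> N (b m) \<le> 1) \<and>
        (\<forall>n. (\<lambda>m. T (\<lambda>x. a n x * b m x)) \<longlonglongrightarrow> \<alpha> n) \<and> \<alpha> \<longlonglongrightarrow> L1 \<and>
        (\<forall>m. (\<lambda>n. T (\<lambda>x. a n x * b m x)) \<longlonglongrightarrow> \<beta> m) \<and> \<beta> \<longlonglongrightarrow> L2
        \<longrightarrow> L1 = L2)"

definition l1_space :: "('a, 'b) monoid_scheme \<Rightarrow> ('a \<Rightarrow> complex) set" where
  "l1_space G = {f. in_lp G 1 f}"

end

theory Submission
  imports Defs
begin

text \<open>Every function on \<open>G\<close> factors as \<open>u = u * \<delta>\<^sub>e\<^sup>\<or>\<close>, so its \<open>A\<^sub>p\<close>-norm is at most its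
  \<open>\<ell>\<^sup>q\<close>-norm. The indicator of an \<open>n\<close>-element set scaled by \<open>n\<^sup>-\<^sup>1\<^sup>/\<^sup>q\<close> therefore lies in the
  \<open>A\<^sub>p\<close>-unit ball, while its \<open>\<ell>\<^sup>1\<close>-norm is \<open>n\<^sup>1\<^sup>/\<^sup>p\<close>; hence the hypothesis forces \<open>G\<close> to be
  finite. For finite \<open>G\<close> both algebras are the finite-dimensional space of all functions
  on \<open>G\<close>, where a functional is a weighted sum of point evaluations and bounded sequences
  have pointwise convergent subsequences: both iterated limits then equal the value of the
  weighted sum at the pair of limit functions. Subgroups and element orders are bounded
  by \<open>|G|\<close>.\<close>

definition vanishing_off :: "'x set \<Rightarrow> ('x \<Rightarrow> complex) set" where
  "vanishing_off C = {f. \<forall>x. x \<notin> C \<longrightarrow> f x = 0}"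

lemma bounded_functions_convergent_subseq:
  fixes a :: "nat \<Rightarrow> 'x \<Rightarrow> complex"
  assumes "finite C" and bounded: "\<And>n x. x \<in> C \<Longrightarrow> norm (a n x) \<le> K"
  obtains l r where "strict_mono r" "\<And>x. x \<in> C \<Longrightarrow> (\<lambda>n. a (r n) x) \<longlonglongrightarrow> l x"
proof -
  have "\<forall>D\<subseteq>C. \<exists>l r. strict_mono r \<and>
      (\<forall>e>0. eventually (\<lambda>n. \<forall>x\<in>D. dist (a (r n) x) (l x) < e) sequentially)"
    by (rule compact_lemma_general[where proj = "\<lambda>f x. f x" and unproj = "\<lambda>f. f"])
      (use assms in \<open>auto simp: bounded_iff\<close>)
  then obtain l r where "strict_mono r"
    and uniform: "\<forall>e>0. eventually (\<lambda>n. \<forall>x\<in>C. dist (a (r n) x) (l x) < e) sequentially"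
    by blast
  have "(\<lambda>n. a (r n) x) \<longlonglongrightarrow> l x" if "x \<in> C" for x
    unfolding tendsto_iff
  proof (intro allI impI)
    fix e :: real
    assume "0 < e"
    with uniform have "eventually (\<lambda>n. \<forall>x\<in>C. dist (a (r n) x) (l x) < e) sequentially"
      by blast
    then show "eventually (\<lambda>n. dist (a (r n) x) (l x) < e) sequentially"
      by eventually_elim (use that in blast)
  qed
  with \<open>strict_mono r\<close> show thesis by (rule that)
qed

lemma iterated_limit_eq_at_limit_functions:
  fixes a b :: "nat \<Rightarrow> 'x \<Rightarrow> complex" and c :: "'x \<Rightarrow> complex"
  assumes "strict_mono r" "strict_mono s"
    and a_lim: "\<And>x. x \<in> C \<Longrightarrow> (\<lambda>n. a (r n) x) \<longlonglongrightarrow> la x"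
    and b_lim: "\<And>x. x \<in> C \<Longrightarrow> (\<lambda>m. b (s m) x) \<longlonglongrightarrow> lb x"
    and inner: "\<And>n. (\<lambda>m. \<Sum>x\<in>C. c x * a n x * b m x) \<longlonglongrightarrow> \<alpha> n"
    and outer: "\<alpha> \<longlonglongrightarrow> L"
  shows "L = (\<Sum>x\<in>C. c x * la x * lb x)"
proof -
  have \<alpha>_eq: "\<alpha> n = (\<Sum>x\<in>C. c x * a n x * lb x)" for n
  proof (rule LIMSEQ_unique)
    show "(\<lambda>m. \<Sum>x\<in>C. c x * a n x * b (s m) x) \<longlonglongrightarrow> \<alpha> n"
      using LIMSEQ_subseq_LIMSEQ[OF inner \<open>strict_mono s\<close>] by (simp add: o_def)
    show "(\<lambda>m. \<Sum>x\<in>C. c x * a n x * b (s m) x) \<longlonglongrightarrow> (\<Sum>x\<in>C. c x * a n x * lb x)"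
      by (intro tendsto_intros b_lim)
  qed
  show ?thesis
  proof (rule LIMSEQ_unique)
    show "(\<lambda>n. \<alpha> (r n)) \<longlonglongrightarrow> L"
      using LIMSEQ_subseq_LIMSEQ[OF outer \<open>strict_mono r\<close>] by (simp add: o_def)
    show "(\<lambda>n. \<alpha> (r n)) \<longlonglongrightarrow> (\<Sum>x\<in>C. c x * la x * lb x)"
      unfolding \<alpha>_eq by (intro tendsto_intros a_lim)
  qed
qed

lemma additive_homogeneous_eq_weighted_sum:
  fixes T :: "('x \<Rightarrow> complex) \<Rightarrow> complex"
  assumes "finite C"
    and add: "\<And>a b. a \<in> vanishing_off C \<Longrightarrow> b \<in> vanishing_off C \<Longrightarrow> T (\<lambda>x. a x + b x) = T a + T b"
    and scale: "\<And>a c. a \<in> vanishing_off C \<Longrightarrow> T (\<lambda>x. c * a x) = c * T a"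
    and u: "u \<in> vanishing_off C"
  shows "T u = (\<Sum>x\<in>C. u x * T (\<lambda>y. if y = x then 1 else 0))"
proof -
  have partial: "T (\<lambda>y. \<Sum>x\<in>S. u x * (if y = x then 1 else 0))
      = (\<Sum>x\<in>S. u x * T (\<lambda>y. if y = x then 1 else 0))" if "S \<subseteq> C" for S
    using finite_subset[OF that \<open>finite C\<close>] that
  proof (induction S rule: finite_subset_induct')
    case empty
    show ?case using scale[of "\<lambda>_. 0" 0] by (simp add: vanishing_off_def)
  next
    case (insert x S)
    let ?\<delta> = "\<lambda>z y. if y = z then 1 else 0 :: complex"
    have "T (\<lambda>y. \<Sum>z\<in>insert x S. u z * ?\<delta> z y) = T (\<lambda>y. u x * ?\<delta> x y + (\<Sum>z\<in>S. u z * ?\<delta> z y))"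
      using insert by simp
    also have "\<dots> = T (\<lambda>y. u x * ?\<delta> x y) + T (\<lambda>y. \<Sum>z\<in>S. u z * ?\<delta> z y)"
      using insert by (intro add) (auto simp: vanishing_off_def intro!: sum.neutral)
    also have "T (\<lambda>y. u x * ?\<delta> x y) = u x * T (?\<delta> x)"
      using insert by (intro scale) (auto simp: vanishing_off_def)
    finally show ?case using insert by simp
  qed
  have "u = (\<lambda>y. \<Sum>x\<in>C. u x * (if y = x then 1 else 0))"
  proof
    fix y
    have "(\<Sum>x\<in>C. u x * (if y = x then 1 else 0)) = (\<Sum>x\<in>C. if y = x then u y else 0)"
      by (rule sum.cong) auto
    then show "u y = (\<Sum>x\<in>C. u x * (if y = x then 1 else 0))"
      using \<open>finite C\<close> u by (simp add: vanishing_off_def)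
  qed
  with partial[of C] show ?thesis by simp
qed

lemma Arens_regular_finite_support:
  fixes N :: "('x \<Rightarrow> complex) \<Rightarrow> real"
  assumes "finite C"
    and unit_ball_bounded: "\<And>a x. a \<in> vanishing_off C \<Longrightarrow> N a \<le> 1 \<Longrightarrow> x \<in> C \<Longrightarrow> norm (a x) \<le> K"
  shows "Arens_regular (vanishing_off C) N"
  unfolding Arens_regular_def
proof (intro allI ballI impI, elim conjE)
  fix a b :: "nat \<Rightarrow> 'x \<Rightarrow> complex" and T \<alpha> \<beta> L1 L2
  assume T: "T \<in> dual_space (vanishing_off C) N"
    and a: "\<forall>n. a n \<in> vanishing_off C \<and> N (a n) \<le> 1"
    and b: "\<forall>m. b m \<in> vanishing_off C \<and> N (b m) \<le> 1"
    and \<alpha>: "\<forall>n. (\<lambda>m. T (\<lambda>x. a n x * b m x)) \<longlonglongrightarrow> \<alpha> n" "\<alpha> \<longlonglongrightarrow> L1"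
    and \<beta>: "\<forall>m. (\<lambda>n. T (\<lambda>x. a n x * b m x)) \<longlonglongrightarrow> \<beta> m" "\<beta> \<longlonglongrightarrow> L2"
  define c where "c x = T (\<lambda>y. if y = x then 1 else 0)" for x
  have T_prod: "T (\<lambda>x. a n x * b m x) = (\<Sum>x\<in>C. c x * a n x * b m x)" for n m
  proof -
    have "(\<lambda>x. a n x * b m x) \<in> vanishing_off C"
      using a by (simp add: vanishing_off_def)
    with T have "T (\<lambda>x. a n x * b m x) = (\<Sum>x\<in>C. a n x * b m x * c x)"
      unfolding c_def dual_space_def
      by (intro additive_homogeneous_eq_weighted_sum[OF \<open>finite C\<close>]) auto
    then show ?thesis
      by (simp add: mult_ac)
  qed
  have "norm (a n x) \<le> K" "norm (b n x) \<le> K" if "x \<in> C" for n x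
    using a b unit_ball_bounded that by blast+
  then obtain la lb r s where r: "strict_mono r" and s: "strict_mono s"
    and la: "\<And>x. x \<in> C \<Longrightarrow> (\<lambda>n. a (r n) x) \<longlonglongrightarrow> la x"
    and lb: "\<And>x. x \<in> C \<Longrightarrow> (\<lambda>m. b (s m) x) \<longlonglongrightarrow> lb x"
    using bounded_functions_convergent_subseq[OF \<open>finite C\<close>] by metis
  have "(\<lambda>m. \<Sum>x\<in>C. c x * a n x * b m x) \<longlonglongrightarrow> \<alpha> n" for n
    using \<alpha>(1)[rule_format, of n] unfolding T_prod .
  from iterated_limit_eq_at_limit_functions[OF r s la lb this \<alpha>(2)]
  have L1: "L1 = (\<Sum>x\<in>C. c x * la x * lb x)" .
  have "(\<lambda>n. \<Sum>x\<in>C. c x * b m x * a n x) \<longlonglongrightarrow> \<beta> m" for m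
    using \<beta>(1)[rule_format, of m] unfolding T_prod by (simp add: mult_ac)
  from iterated_limit_eq_at_limit_functions[OF s r lb la this \<beta>(2)]
  have L2: "L2 = (\<Sum>x\<in>C. c x * lb x * la x)" .
  show "L1 = L2"
    unfolding L1 L2 by (simp add: mult_ac)
qed

lemma lp_norm_zero [simp]: "lp_norm G p (\<lambda>_. 0) = 0"
  by (simp add: lp_norm_def)

lemma in_lp_zero [simp]: "in_lp G p (\<lambda>_. 0)"
  by (simp add: in_lp_def)

lemma lp_norm_nonneg: "0 \<le> lp_norm G p f"
  by (simp add: lp_norm_def)

lemma in_lp_iff_vanishing_off_finite:
  assumes "finite (carrier G)"
  shows "in_lp G p f \<longleftrightarrow> f \<in> vanishing_off (carrier G)"
  using assms by (simp add: in_lp_def vanishing_off_def)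

lemma norm_le_l1_norm_finite:
  assumes "finite (carrier G)" "x \<in> carrier G"
  shows "norm (f x) \<le> lp_norm G 1 f"
proof -
  have "norm (f x) \<le> (\<Sum>y\<in>carrier G. norm (f y))"
    using assms by (intro member_le_sum) auto
  also have "\<dots> = lp_norm G 1 f"
    using assms by (simp add: lp_norm_def sum_nonneg)
  finally show ?thesis .
qed

lemma
  assumes "finite E" "E \<subseteq> carrier G" "0 < r" "0 \<le> c"
  shows in_lp_scaled_indicator: "in_lp G r (\<lambda>x. if x \<in> E then complex_of_real c else 0)"
    and lp_norm_scaled_indicator:
      "lp_norm G r (\<lambda>x. if x \<in> E then complex_of_real c else 0) = real (card E) powr (1 / r) * c"
proof -
  define w where "w x = norm (if x \<in> E then complex_of_real c else 0) powr r" for x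
  have w_sum: "(w has_sum (real (card E) * c powr r)) (carrier G)"
    using assms by (intro has_sum_finite_neutralI[of E]) (auto simp: w_def)
  then show "in_lp G r (\<lambda>x. if x \<in> E then complex_of_real c else 0)"
    using assms(2) unfolding in_lp_def w_def[abs_def] by (auto dest: has_sum_imp_summable)
  have "lp_norm G r (\<lambda>x. if x \<in> E then complex_of_real c else 0) = (real (card E) * c powr r) powr (1 / r)"
    using infsumI[OF w_sum] by (simp add: lp_norm_def w_def[abs_def])
  also have "\<dots> = real (card E) powr (1 / r) * c"
    using assms(3,4) by (simp add: powr_mult powr_powr)
  finally show "lp_norm G r (\<lambda>x. if x \<in> E then complex_of_real c else 0) = real (card E) powr (1 / r) * c" .
qed

definition delta_one :: "('a, 'b) monoid_scheme \<Rightarrow> 'a \<Rightarrow> complex" where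
  "delta_one G = (\<lambda>x. if x = \<one>\<^bsub>G\<^esub> then 1 else 0)"

lemma
  assumes "group G" "0 < p"
  shows in_lp_delta_one: "in_lp G p (delta_one G)"
    and lp_norm_delta_one: "lp_norm G p (delta_one G) = 1"
proof -
  have "delta_one G = (\<lambda>x. if x \<in> {\<one>\<^bsub>G\<^esub>} then complex_of_real 1 else 0)"
    by (auto simp: delta_one_def)
  moreover have "{\<one>\<^bsub>G\<^esub>} \<subseteq> carrier G"
    using group.is_monoid[OF \<open>group G\<close>] by simp
  ultimately show "in_lp G p (delta_one G)" "lp_norm G p (delta_one G) = 1"
    using in_lp_scaled_indicator[of "{\<one>\<^bsub>G\<^esub>}" G p 1] lp_norm_scaled_indicator[of "{\<one>\<^bsub>G\<^esub>}" G p 1]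
      \<open>0 < p\<close> by simp_all
qed

lemma conv_check_delta_one:
  fixes G (structure)
  assumes "group G" "x \<in> carrier G"
  shows "conv G u (check_fun G (delta_one G)) x = u x"
proof -
  interpret group G by fact
  have kernel: "u y * check_fun G (delta_one G) (inv y \<otimes> x) = (if y = x then u x else 0)"
    if "y \<in> carrier G" for y
    using that assms(2) by (auto simp: check_fun_def delta_one_def inv_mult_group inv_solve_left')
  have "((\<lambda>y. u y * check_fun G (delta_one G) (inv y \<otimes> x)) has_sum u x) (carrier G)
      \<longleftrightarrow> ((\<lambda>y. if y = x then u x else 0) has_sum u x) (carrier G)"
    by (rule has_sum_cong) (erule kernel)
  also have "\<dots>"
    using assms(2) by (intro has_sum_finite_neutralI[of "{x}"]) auto
  finally have "(\<Sum>\<^sub>\<infinity>y\<in>carrier G. u y * check_fun G (delta_one G) (inv y \<otimes> x)) = u x"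
    by (rule infsumI)
  with assms(2) show ?thesis
    by (simp add: conv_def)
qed

lemma Ap_norm_le_single_term:
  assumes f: "in_lp G p f" and g: "in_lp G (conj_exp p) g"
    and u: "\<And>x. x \<in> carrier G \<Longrightarrow> conv G g (check_fun G f) x = u x" "u \<in> vanishing_off (carrier G)"
  shows "u \<in> Ap_space G p" "Ap_norm G p u \<le> lp_norm G p f * lp_norm G (conj_exp p) g"
proof -
  let ?f = "\<lambda>i::nat. if i = 0 then f else (\<lambda>_. 0)" and ?g = "\<lambda>i::nat. if i = 0 then g else (\<lambda>_. 0)"
  let ?N = "lp_norm G p f * lp_norm G (conj_exp p) g"
  have "lp_norm G p (?f i) * lp_norm G (conj_exp p) (?g i) = (if i = 0 then ?N else 0)" for i
    by simp
  then have norms: "(\<lambda>i. lp_norm G p (?f i) * lp_norm G (conj_exp p) (?g i)) sums ?N"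
    using sums_single[of 0 "\<lambda>_. ?N"] by simp
  have conv: "(\<lambda>i. conv G (?g i) (check_fun G (?f i)) x) sums u x" if "x \<in> carrier G" for x
  proof -
    have "conv G (?g i) (check_fun G (?f i)) x = (if i = 0 then u x else 0)" for i
      using that u(1)[OF that] by (simp add: conv_def)
    then show ?thesis
      using sums_single[of 0 "\<lambda>_. u x"] by simp
  qed
  have "in_lp G p (?f i) \<and> in_lp G (conj_exp p) (?g i)" for i
    using f g by simp
  with norms[THEN sums_summable] conv u(2) have rep: "Ap_rep G p u ?f ?g"
    unfolding Ap_rep_def vanishing_off_def by blast
  then show "u \<in> Ap_space G p"
    unfolding Ap_space_def by (intro CollectI exI)
  have "?N \<in> {(\<Sum>i. lp_norm G p (f i) * lp_norm G (conj_exp p) (g i)) | f g. Ap_rep G p u f g}"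
    using sums_unique[OF norms] rep by (intro CollectI exI conjI)
  moreover have "bdd_below {(\<Sum>i. lp_norm G p (f i) * lp_norm G (conj_exp p) (g i)) | f g. Ap_rep G p u f g}"
    by (rule bdd_belowI[of _ 0])
      (auto simp: Ap_rep_def intro!: suminf_nonneg mult_nonneg_nonneg lp_norm_nonneg)
  ultimately show "Ap_norm G p u \<le> ?N"
    unfolding Ap_norm_def by (rule cInf_lower)
qed

lemma Ap_norm_le_lq_norm:
  assumes "group G" "1 < p" and u: "in_lp G (conj_exp p) u"
  shows "u \<in> Ap_space G p" "Ap_norm G p u \<le> lp_norm G (conj_exp p) u"
proof -
  have "u \<in> vanishing_off (carrier G)"
    using u by (simp add: in_lp_def vanishing_off_def)
  note single_term = Ap_norm_le_single_term[OF in_lp_delta_one[OF assms(1)] u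
      conv_check_delta_one[OF assms(1)] this]
  show "u \<in> Ap_space G p"
    using single_term(1) \<open>1 < p\<close> by simp
  show "Ap_norm G p u \<le> lp_norm G (conj_exp p) u"
    using single_term(2) lp_norm_delta_one[OF assms(1)] \<open>1 < p\<close> by simp
qed

lemma l1_space_finite:
  assumes "finite (carrier G)"
  shows "l1_space G = vanishing_off (carrier G)"
  using assms by (auto simp: l1_space_def in_lp_iff_vanishing_off_finite)

lemma Ap_space_finite:
  assumes "group G" "1 < p" "finite (carrier G)"
  shows "Ap_space G p = vanishing_off (carrier G)"
  using assms(3) Ap_norm_le_lq_norm(1)[OF assms(1,2)]
  by (auto simp: Ap_space_def Ap_rep_def vanishing_off_def in_lp_iff_vanishing_off_finite)

lemma finite_carrier_if_Ap_unit_ball_l1_bounded: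
  assumes "group G" "1 < p" "0 < \<alpha>"
    and bounded: "\<And>f. f \<in> l1_space G \<Longrightarrow> Ap_norm G p f \<le> 1 \<Longrightarrow> lp_norm G 1 f \<le> \<alpha>"
  shows "finite (carrier G)"
proof (rule ccontr)
  assume "infinite (carrier G)"
  define q where "q = conj_exp p"
  have "1 < q" and q_p: "1 - 1 / q = 1 / p"
    using \<open>1 < p\<close> by (simp_all add: q_def conj_exp_def field_simps)
  obtain n :: nat where n: "\<alpha> powr p < real n"
    using reals_Archimedean2 by blast
  then have "0 < n"
    using \<open>0 < \<alpha>\<close> by (metis gr0I of_nat_0 powr_gt_zero less_asym)
  obtain E where E: "E \<subseteq> carrier G" "finite E" "card E = n"
    using infinite_arbitrarily_large[OF \<open>infinite (carrier G)\<close>] by blast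
  define u where "u = (\<lambda>x. if x \<in> E then complex_of_real (real n powr (- 1 / q)) else 0)"
  have "Ap_norm G p u \<le> lp_norm G q u"
    using Ap_norm_le_lq_norm(2)[OF \<open>group G\<close> \<open>1 < p\<close>, of u] E \<open>1 < q\<close>
    by (simp add: u_def q_def[symmetric] in_lp_scaled_indicator)
  also have "\<dots> = real n powr (1 / q) * real n powr (- 1 / q)"
    using E \<open>1 < q\<close> by (simp add: u_def lp_norm_scaled_indicator)
  also have "\<dots> = 1"
    using \<open>0 < n\<close> by (simp add: powr_add[symmetric])
  finally have "Ap_norm G p u \<le> 1" .
  moreover have "u \<in> l1_space G"
    using E by (simp add: l1_space_def u_def in_lp_scaled_indicator)
  moreover have "lp_norm G 1 u = real n powr (1 / p)"
  proof -
    have "lp_norm G 1 u = real n powr 1 * real n powr (- 1 / q)"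
      using E \<open>0 < n\<close> by (simp add: u_def lp_norm_scaled_indicator)
    also have "\<dots> = real n powr (1 / p)"
      using powr_add[of "real n" 1 "- 1 / q"] q_p by simp
    finally show ?thesis .
  qed
  moreover have "\<alpha> < real n powr (1 / p)"
  proof -
    have "\<alpha> = (\<alpha> powr p) powr (1 / p)"
      using \<open>0 < \<alpha>\<close> \<open>1 < p\<close> by (simp add: powr_powr)
    also have "\<dots> < real n powr (1 / p)"
      using n \<open>1 < p\<close> by (intro powr_less_mono2) auto
    finally show ?thesis .
  qed
  ultimately show False
    using bounded[OF \<open>u \<in> l1_space G\<close> \<open>Ap_norm G p u \<le> 1\<close>] by linarith
qed

lemma not_card_increasing_subsets_of_finite:
  assumes "finite S" "\<And>n. A n \<subseteq> S"
  shows "\<not> (\<forall>n. card (A n) < card (A (Suc n)))"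
proof
  assume increasing: "\<forall>n. card (A n) < card (A (Suc n))"
  have "n \<le> card (A n)" for n
  proof (induction n)
    case (Suc n)
    then show ?case using increasing[rule_format, of n] by simp
  qed simp
  moreover have "card (A n) \<le> card S" for n
    by (rule card_mono[OF assms])
  ultimately show False
    by (metis Suc_n_not_le_n le_trans)
qed

lemma (in group) ord_bounded_if_finite:
  assumes "finite (carrier G)"
  shows "\<exists>M::nat>0. \<forall>x\<in>carrier G. 0 < ord x \<and> ord x \<le> M"
proof (intro exI[of _ "order G"] conjI ballI)
  show "0 < order G"
    using assms by (simp add: order_gt_0_iff_finite)
  show "0 < ord x" "ord x \<le> order G" if "x \<in> carrier G" for x
    using ord_ge_1[OF assms that] ord_le_group_order[OF assms that] by simp_all
qed

theorem theorem3p7: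
  fixes G :: "('a, 'b) monoid_scheme" and p :: real
  assumes "group G" and "1 < p"
    and "\<exists>\<alpha>>0. \<forall>f\<in>l1_space G. Ap_norm G p f \<le> 1 \<longrightarrow> lp_norm G 1 f \<le> \<alpha>"
  shows "Arens_regular (l1_space G) (Ap_norm G p) \<and>
         Arens_regular (Ap_space G p) (Ap_norm G p) \<and>
         \<not> (\<exists>H. subgroup H G \<and> infinite H \<and> comm_group (G\<lparr>carrier := H\<rparr>)) \<and>
         \<not> (\<exists>Hs :: nat \<Rightarrow> 'a set. (\<forall>n. subgroup (Hs n) G \<and> finite (Hs n)) \<and>
              (\<forall>n. card (Hs n) < card (Hs (Suc n)))) \<and>
         (\<exists>M::nat>0. \<forall>x\<in>carrier G. 0 < group.ord G x \<and> group.ord G x \<le> M)"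
proof -
  interpret group G by fact
  obtain \<alpha> where "0 < \<alpha>" and bounded: "\<forall>f\<in>l1_space G. Ap_norm G p f \<le> 1 \<longrightarrow> lp_norm G 1 f \<le> \<alpha>"
    using assms(3) by blast
  have fin: "finite (carrier G)"
    using finite_carrier_if_Ap_unit_ball_l1_bounded[OF assms(1,2) \<open>0 < \<alpha>\<close>] bounded by blast
  have "norm (f x) \<le> \<alpha>"
    if "f \<in> vanishing_off (carrier G)" "Ap_norm G p f \<le> 1" "x \<in> carrier G" for f x
    using norm_le_l1_norm_finite[OF fin that(3), of f] bounded that(1,2) l1_space_finite[OF fin]
    by fastforce
  then have "Arens_regular (vanishing_off (carrier G)) (Ap_norm G p)"
    by (rule Arens_regular_finite_support[OF fin])
  moreover have "\<not> (\<exists>H. subgroup H G \<and> infinite H \<and> comm_group (G\<lparr>carrier := H\<rparr>))"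
    using fin subgroup.subset finite_subset by blast
  moreover have "\<not> (\<exists>Hs :: nat \<Rightarrow> 'a set. (\<forall>n. subgroup (Hs n) G \<and> finite (Hs n)) \<and>
      (\<forall>n. card (Hs n) < card (Hs (Suc n))))"
    using not_card_increasing_subsets_of_finite[OF fin] subgroup.subset by metis
  ultimately show ?thesis
    using ord_bounded_if_finite[OF fin] l1_space_finite[OF fin] Ap_space_finite[OF assms(1,2) fin]
    by simp
qed

end
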